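(* Let $\mathfrak g$ be a Lie algebra over a field $\mathbb k$ and $X$ its associated binary SD object. The homomorphism $\Psi^2\colon H^2_{\rm Lie}(\mathfrak g;\mathfrak g)\to H^2_{\rm BSD}(X;X)$ induced by $\phi\mapsto[(a,x)\otimes(b,y)\mapsto(0,\phi(x,y))]$ is injective. If in addition $\mathfrak g$ has trivial center, $\Psi^2$ is an isomorphism $H^2_{\rm Lie}(\mathfrak g;\mathfrak g)\cong H^2_{\rm BSD}(X;X)$.
   Context: Associated binary SD object: $X=\mathbb k\oplus\mathfrak g$, $\Delta(a,x)=(a,x)\otimes(1,0)+(1,0)\otimes(0,x)$, $\varepsilon(a,x)=a$, $q((a,x)\otimes(b,y))=(ab,bx+[x,y])$; Sweedler $\Delta(w)=w^{(1)}\otimes w^{(2)}$; $\tau$ the flip. BSD cohomology: $C^1_{\rm BSD}$ = linear $f\colon X\to X$ with $\Delta f=(f\otimes\mathbb 1+\mathbb 1\otimes f)\Delta$; $C^2_{\rm BSD}$ = linear $\phi\colon X\otimes X\to X$ with $\Delta\phi=(\phi\otimes q+q\otimes\phi)(\mathbb 1\otimes\tau\otimes\mathbb 1)(\Delta\otimes\Delta)$; $\delta^1f(u\otimes v)=f(q(u\otimes v))-q(f(u)\otimes v)-q(u\otimes f(v))$; $\delta^2\phi(u\otimes v\otimes w)=q(\phi(u\otimes v)\otimes w)+\phi(q(u\otimes v)\otimes w)-\phi(q(u\otimes w^{(1)})\otimes q(v\otimes w^{(2)}))-q(\phi(u\otimes w^{(1)})\otimes q(v\otimes w^{(2)}))-q(q(u\otimes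 w^{(1)})\otimes\phi(v\otimes w^{(2)}))$; $H^2_{\rm BSD}=(C^2_{\rm BSD}\cap\ker\delta^2)/\delta^1(C^1_{\rm BSD})$. Lie cohomology: $2$-cochains are alternating bilinear $\phi\colon\mathfrak g\times\mathfrak g\to\mathfrak g$; $\delta^2\phi(x,y,z)=[\phi(x,y),z]+[\phi(y,z),x]+[\phi(z,x),y]+\phi([x,y],z)+\phi([y,z],x)+\phi([z,x],y)$; $\delta^1f(x,y)=f([x,y])-[f(x),y]-[x,f(y)]$ for linear $f\colon\mathfrak g\to\mathfrak g$; $H^2_{\rm Lie}=\ker\delta^2/\operatorname{im}\delta^1$. *)

theory Defs
  imports Complex_Main "HOL-Library.Product_Plus"
begin

section \<open>Lie algebras over a field k (vector space given by an explicit scalar action)\<close>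

definition bilinear_map ::
  "('k::field \<Rightarrow> 'a::ab_group_add \<Rightarrow> 'a) \<Rightarrow> ('k \<Rightarrow> 'b::ab_group_add \<Rightarrow> 'b) \<Rightarrow>
   ('k \<Rightarrow> 'c::ab_group_add \<Rightarrow> 'c) \<Rightarrow> ('a \<Rightarrow> 'b \<Rightarrow> 'c) \<Rightarrow> bool" where
  "bilinear_map s1 s2 s3 B \<longleftrightarrow>
     (\<forall>x. Vector_Spaces.linear s2 s3 (B x)) \<and> (\<forall>y. Vector_Spaces.linear s1 s3 (\<lambda>x. B x y))"

definition lie_algebra :: "('k::field \<Rightarrow> 'v::ab_group_add \<Rightarrow> 'v) \<Rightarrow> ('v \<Rightarrow> 'v \<Rightarrow> 'v) \<Rightarrow> bool" where
  "lie_algebra scale br \<longleftrightarrow> vector_space scale \<and> bilinear_map scale scale scale br \<and>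
     (\<forall>x. br x x = 0) \<and>
     (\<forall>x y z. br x (br y z) + br y (br z x) + br z (br x y) = 0)"

definition trivial_center :: "('v::ab_group_add \<Rightarrow> 'v \<Rightarrow> 'v) \<Rightarrow> bool" where
  "trivial_center br \<longleftrightarrow> (\<forall>z. (\<forall>x. br z x = 0) \<longrightarrow> z = 0)"

definition lie_C2 :: "('k::field \<Rightarrow> 'v::ab_group_add \<Rightarrow> 'v) \<Rightarrow> ('v \<Rightarrow> 'v \<Rightarrow> 'v) set" where
  "lie_C2 scale = {\<phi>. bilinear_map scale scale scale \<phi> \<and> (\<forall>x. \<phi> x x = 0)}"

definition lie_delta2 :: "('v::ab_group_add \<Rightarrow> 'v \<Rightarrow> 'v) \<Rightarrow> ('v \<Rightarrow> 'v \<Rightarrow> 'v) \<Rightarrow> 'v \<Rightarrow> 'v \<Rightarrow> 'v \<Rightarrow> 'v" where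
  "lie_delta2 br \<phi> x y z =
     br (\<phi> x y) z + br (\<phi> y z) x + br (\<phi> z x) y + \<phi> (br x y) z + \<phi> (br y z) x + \<phi> (br z x) y"

definition lie_delta1 :: "('v::ab_group_add \<Rightarrow> 'v \<Rightarrow> 'v) \<Rightarrow> ('v \<Rightarrow> 'v) \<Rightarrow> 'v \<Rightarrow> 'v \<Rightarrow> 'v" where
  "lie_delta1 br f x y = f (br x y) - br (f x) y - br x (f y)"

definition lie_Z2 :: "('k::field \<Rightarrow> 'v::ab_group_add \<Rightarrow> 'v) \<Rightarrow> ('v \<Rightarrow> 'v \<Rightarrow> 'v) \<Rightarrow> ('v \<Rightarrow> 'v \<Rightarrow> 'v) set" where
  "lie_Z2 scale br = {\<phi> \<in> lie_C2 scale. \<forall>x y z. lie_delta2 br \<phi> x y z = 0}"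

definition lie_B2 :: "('k::field \<Rightarrow> 'v::ab_group_add \<Rightarrow> 'v) \<Rightarrow> ('v \<Rightarrow> 'v \<Rightarrow> 'v) \<Rightarrow> ('v \<Rightarrow> 'v \<Rightarrow> 'v) set" where
  "lie_B2 scale br = lie_delta1 br ` {f. Vector_Spaces.linear scale scale f}"

section \<open>The associated binary SD object X = k \<oplus> g\<close>

type_synonym ('k, 'v) sdX = "'k \<times> 'v"

definition xscale :: "('k::field \<Rightarrow> 'v::ab_group_add \<Rightarrow> 'v) \<Rightarrow> 'k \<Rightarrow> ('k, 'v) sdX \<Rightarrow> ('k, 'v) sdX" where
  "xscale scale c w = (c * fst w, scale c (snd w))"

definition xunit :: "('k::field, 'v::ab_group_add) sdX" where
  "xunit = (1, 0)"

definition xq :: "('k::field \<Rightarrow> 'v::ab_group_add \<Rightarrow> 'v) \<Rightarrow> ('v \<Rightarrow> 'v \<Rightarrow> 'v) \<Rightarrow>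
    ('k, 'v) sdX \<Rightarrow> ('k, 'v) sdX \<Rightarrow> ('k, 'v) sdX" where
  "xq scale br u v = (fst u * fst v, scale (fst v) (snd u) + br (snd u) (snd v))"

text \<open>The coproduct \<Delta>(a,x) = (a,x) \<otimes> (1,0) + (1,0) \<otimes> (0,x), as a formal sum of simple tensors
  (the Sweedler terms w^(1) \<otimes> w^(2)).\<close>
definition xDelta :: "('k::field, 'v::ab_group_add) sdX \<Rightarrow> (('k, 'v) sdX \<times> ('k, 'v) sdX) list" where
  "xDelta w = [(w, xunit), (xunit, (0, snd w))]"

text \<open>Equality in X \<otimes> X of two finite sums of simple tensors: over a field, two elements of a
  tensor product V \<otimes> V are equal iff every bilinear form V \<times> V \<rightarrow> k (= every linear functional
  on V \<otimes> V, by the universal property) takes the same value on them.\<close>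
definition tensor_eq :: "('k::field \<Rightarrow> 'v::ab_group_add \<Rightarrow> 'v) \<Rightarrow>
    (('k, 'v) sdX \<times> ('k, 'v) sdX) list \<Rightarrow> (('k, 'v) sdX \<times> ('k, 'v) sdX) list \<Rightarrow> bool" where
  "tensor_eq scale S T \<longleftrightarrow>
     (\<forall>\<beta> :: ('k, 'v) sdX \<Rightarrow> ('k, 'v) sdX \<Rightarrow> 'k.
        bilinear_map (xscale scale) (xscale scale) (*) \<beta> \<longrightarrow>
        sum_list (map (\<lambda>(u, v). \<beta> u v) S) = sum_list (map (\<lambda>(u, v). \<beta> u v) T))"

text \<open>1-cochains: linear f : X \<rightarrow> X with \<Delta> f = (f \<otimes> 1 + 1 \<otimes> f) \<Delta>.\<close>
definition bsd_C1 :: "('k::field \<Rightarrow> 'v::ab_group_add \<Rightarrow> 'v) \<Rightarrow> (('k, 'v) sdX \<Rightarrow> ('k, 'v) sdX) set" where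
  "bsd_C1 scale = {f. Vector_Spaces.linear (xscale scale) (xscale scale) f \<and>
     (\<forall>w. tensor_eq scale (xDelta (f w))
            (map (\<lambda>(w1, w2). (f w1, w2)) (xDelta w) @ map (\<lambda>(w1, w2). (w1, f w2)) (xDelta w)))}"

text \<open>2-cochains: linear \<phi> : X \<otimes> X \<rightarrow> X, i.e. bilinear maps X \<times> X \<rightarrow> X, with
  \<Delta> \<phi> = (\<phi> \<otimes> q + q \<otimes> \<phi>)(1 \<otimes> \<tau> \<otimes> 1)(\<Delta> \<otimes> \<Delta>); by linearity it suffices (and is necessary)
  to check this on simple tensors u \<otimes> v.\<close>
definition bsd_C2 :: "('k::field \<Rightarrow> 'v::ab_group_add \<Rightarrow> 'v) \<Rightarrow> ('v \<Rightarrow> 'v \<Rightarrow> 'v) \<Rightarrow>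
    (('k, 'v) sdX \<Rightarrow> ('k, 'v) sdX \<Rightarrow> ('k, 'v) sdX) set" where
  "bsd_C2 scale br = {\<phi>. bilinear_map (xscale scale) (xscale scale) (xscale scale) \<phi> \<and>
     (\<forall>u v. tensor_eq scale (xDelta (\<phi> u v))
        (concat (map (\<lambda>(u1, u2). concat (map (\<lambda>(v1, v2).
            [(\<phi> u1 v1, xq scale br u2 v2), (xq scale br u1 v1, \<phi> u2 v2)]) (xDelta v))) (xDelta u))))}"

definition bsd_delta1 :: "('k::field \<Rightarrow> 'v::ab_group_add \<Rightarrow> 'v) \<Rightarrow> ('v \<Rightarrow> 'v \<Rightarrow> 'v) \<Rightarrow>
    (('k, 'v) sdX \<Rightarrow> ('k, 'v) sdX) \<Rightarrow> ('k, 'v) sdX \<Rightarrow> ('k, 'v) sdX \<Rightarrow> ('k, 'v) sdX" where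
  "bsd_delta1 scale br f u v = f (xq scale br u v) - xq scale br (f u) v - xq scale br u (f v)"

text \<open>\<delta>^2 \<phi> evaluated on a simple tensor u \<otimes> v \<otimes> w (it is trilinear, so vanishing on simple
  tensors is the same as vanishing on X \<otimes> X \<otimes> X).\<close>
definition bsd_delta2 :: "('k::field \<Rightarrow> 'v::ab_group_add \<Rightarrow> 'v) \<Rightarrow> ('v \<Rightarrow> 'v \<Rightarrow> 'v) \<Rightarrow>
    (('k, 'v) sdX \<Rightarrow> ('k, 'v) sdX \<Rightarrow> ('k, 'v) sdX) \<Rightarrow>
    ('k, 'v) sdX \<Rightarrow> ('k, 'v) sdX \<Rightarrow> ('k, 'v) sdX \<Rightarrow> ('k, 'v) sdX" where
  "bsd_delta2 scale br \<phi> u v w =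
     xq scale br (\<phi> u v) w + \<phi> (xq scale br u v) w
     - sum_list (map (\<lambda>(w1, w2).
          \<phi> (xq scale br u w1) (xq scale br v w2)
          + xq scale br (\<phi> u w1) (xq scale br v w2)
          + xq scale br (xq scale br u w1) (\<phi> v w2)) (xDelta w))"

definition bsd_Z2 :: "('k::field \<Rightarrow> 'v::ab_group_add \<Rightarrow> 'v) \<Rightarrow> ('v \<Rightarrow> 'v \<Rightarrow> 'v) \<Rightarrow>
    (('k, 'v) sdX \<Rightarrow> ('k, 'v) sdX \<Rightarrow> ('k, 'v) sdX) set" where
  "bsd_Z2 scale br = {\<phi> \<in> bsd_C2 scale br. \<forall>u v w. bsd_delta2 scale br \<phi> u v w = 0}"

definition bsd_B2 :: "('k::field \<Rightarrow> 'v::ab_group_add \<Rightarrow> 'v) \<Rightarrow> ('v \<Rightarrow> 'v \<Rightarrow> 'v) \<Rightarrow>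
    (('k, 'v) sdX \<Rightarrow> ('k, 'v) sdX \<Rightarrow> ('k, 'v) sdX) set" where
  "bsd_B2 scale br = bsd_delta1 scale br ` bsd_C1 scale"

definition Psi2 :: "('v \<Rightarrow> 'v \<Rightarrow> 'v) \<Rightarrow> ('k::field, 'v::ab_group_add) sdX \<Rightarrow> ('k, 'v) sdX \<Rightarrow> ('k, 'v) sdX" where
  "Psi2 \<phi> u v = (0, \<phi> (snd u) (snd v))"

end

theory Submission
  imports Defs
begin

text \<open>
  Write \<open>1 = (1, 0)\<close> for the unit of \<open>X\<close> and \<open>\<Psi>\<^sup>1 f = (0, f \<circ> snd)\<close>. The maps \<open>\<Psi>\<^sup>1, \<Psi>\<^sup>2\<close>
  intertwine the differentials, \<open>\<delta>(\<Psi>\<^sup>1 f) = \<Psi>\<^sup>2(\<delta>f)\<close> and \<open>\<delta>(\<Psi>\<^sup>2 \<phi>) = (0, \<delta>\<phi>)\<close> for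
  alternating \<open>\<phi>\<close>, so \<open>\<Psi>\<^sup>2\<close> is defined on cohomology. Applying the counit \<open>\<epsilon> = fst\<close> to
  both tensor factors of the coproduct conditions shows that BSD cochains take values in
  \<open>g\<close>; hence a BSD 1-cochain \<open>F\<close> with \<open>\<delta>F = \<Psi>\<^sup>2\<phi>\<close> restricts to a linear map \<open>f\<close> of
  \<open>g\<close> with \<open>\<delta>f = \<phi>\<close>, which is injectivity.

  If the centre of \<open>g\<close> is trivial, every BSD 2-cocycle \<open>\<psi>\<close> is \<open>\<Psi>\<^sup>2\<close> of its restriction
  to \<open>g \<otimes> g\<close>. The cocycle identity makes \<open>\<psi>(1, 1)\<close> central and turns \<open>n = \<psi>(-, 1)\<close>
  into a derivation with \<open>[n x, z] = n [x, z]\<close>, so \<open>n\<close> has central values; the coproduct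
  condition at \<open>(0, x) \<otimes> (0, y)\<close> says \<open>x \<otimes> s + s \<otimes> x = 0\<close> for \<open>s = \<psi>(1, y)\<close> and all
  \<open>x\<close>, which forces \<open>s\<close> to be central. The restriction is alternating because
  \<open>\<delta>\<psi>(x, y, y) = -[x, \<psi>(y, y)]\<close>.
\<close>

lemma bilinear_map_linear_left:
  "bilinear_map s1 s2 s3 B \<Longrightarrow> Vector_Spaces.linear s1 s3 (\<lambda>x. B x y)"
  by (simp add: bilinear_map_def)

lemma bilinear_map_simps:
  assumes "bilinear_map s1 s2 s3 B"
  shows "B (x + x') y = B x y + B x' y" "B x (y + y') = B x y + B x y'"
    "B (s1 c x) y = s3 c (B x y)" "B x (s2 c y) = s3 c (B x y)"
    "B 0 y = 0" "B x 0 = 0" "B (- x) y = - B x y" "B x (- y) = - B x y"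
    "B (x - x') y = B x y - B x' y" "B x (y - y') = B x y - B x y'"
proof -
  interpret left: module_hom s1 s3 "\<lambda>x. B x y"
    using assms by (simp add: bilinear_map_def module_hom_iff_linear)
  interpret right: module_hom s2 s3 "B x"
    using assms by (simp add: bilinear_map_def module_hom_iff_linear)
  show "B (x + x') y = B x y + B x' y" "B (s1 c x) y = s3 c (B x y)" "B 0 y = 0"
    "B (- x) y = - B x y" "B (x - x') y = B x y - B x' y"
    by (fact left.add left.scale left.zero left.neg left.diff)+
  show "B x (y + y') = B x y + B x y'" "B x (s2 c y) = s3 c (B x y)" "B x 0 = 0"
    "B x (- y) = - B x y" "B x (y - y') = B x y - B x y'"
    by (fact right.add right.scale right.zero right.neg right.diff)+
qed

lemma bilinear_map_alternating_antisym:
  assumes "bilinear_map s s s \<phi>" and "\<forall>x. \<phi> x x = 0"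
  shows "\<phi> x y = - \<phi> y x"
proof -
  have "\<phi> x y + \<phi> y x = \<phi> (x + y) (x + y)"
    unfolding bilinear_map_simps(1,2)[OF assms(1)] using assms(2) by (simp add: add.commute)
  also have "\<dots> = 0" using assms(2) by simp
  finally show ?thesis by (simp add: eq_neg_iff_add_eq_0)
qed

lemma vector_space_xscale: "vector_space scale \<Longrightarrow> vector_space (xscale scale)"
  by (auto simp: vector_space_def xscale_def algebra_simps)

lemma symmetric_tensor_zero_imp_in_span:
  fixes scale :: "'k::field \<Rightarrow> 'v::ab_group_add \<Rightarrow> 'v"
  assumes "vector_space scale" and "s \<noteq> 0"
    and sym: "\<And>l1 l2. Vector_Spaces.linear scale (*) l1 \<Longrightarrow> Vector_Spaces.linear scale (*) l2 \<Longrightarrow>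
      l1 x * l2 s + l1 s * l2 x = 0"
  shows "x \<in> module.span scale {s}"
  \<comment> \<open>Taking \<open>l1 = l2\<close> would only give \<open>2 l(x) l(s) = 0\<close>, useless in characteristic 2.\<close>
proof (rule ccontr)
  interpret V: vector_space scale by fact
  interpret VK: vector_space_pair scale "(*) :: 'k \<Rightarrow> 'k \<Rightarrow> 'k"
    by unfold_locales (simp_all add: algebra_simps)
  assume x: "x \<notin> V.span {s}"
  then have "x \<noteq> s" using V.span_base by blast
  have "V.independent {x, s}"
    using x \<open>s \<noteq> 0\<close> by (simp add: V.independent_insert)
  then obtain l1 l2 :: "'v \<Rightarrow> 'k" where "Vector_Spaces.linear scale (*) l1" "Vector_Spaces.linear scale (*) l2"
    and "l1 s = 1" "l1 x = 0" "l2 x = 1"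
    using VK.linear_independent_extend[of "{x, s}" "\<lambda>z. if z = s then 1 else 0"]
      VK.linear_independent_extend[of "{x, s}" "\<lambda>z. if z = x then 1 else 0"] \<open>x \<noteq> s\<close>
    by fastforce
  with sym show False by fastforce
qed

lemma bilinear_map_mult_linear:
  assumes "Vector_Spaces.linear s1 (*) f" and "Vector_Spaces.linear s2 (*) g"
  shows "bilinear_map s1 s2 (*) (\<lambda>u v. f u * g v)"
  using assms by (auto simp: bilinear_map_def Vector_Spaces.linear_iff algebra_simps)

lemma bilinear_map_Pair_zero:
  assumes "bilinear_map s1 s2 s3 B"
  shows "B (0, 0) y = 0" "B x (0, 0) = 0"
  using bilinear_map_simps(5,6)[OF assms] by (simp_all add: zero_prod_def)

lemma trivial_centerD: "trivial_center br \<Longrightarrow> (\<And>x. br z x = 0) \<Longrightarrow> z = 0"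
  by (simp add: trivial_center_def)

lemma Psi2_diff: "Psi2 (\<phi> - \<phi>') = Psi2 \<phi> - Psi2 \<phi>'"
  by (simp add: fun_eq_iff Psi2_def)

definition Psi1 :: "('v \<Rightarrow> 'v) \<Rightarrow> ('k::field, 'v::ab_group_add) sdX \<Rightarrow> ('k, 'v) sdX" where
  "Psi1 f w = (0, f (snd w))"

definition restrict2 ::
  "(('k::field, 'v::ab_group_add) sdX \<Rightarrow> ('k, 'v) sdX \<Rightarrow> ('k, 'v) sdX) \<Rightarrow> 'v \<Rightarrow> 'v \<Rightarrow> 'v" where
  "restrict2 \<psi> x y = snd (\<psi> (0, x) (0, y))"

locale lie_alg =
  fixes scale :: "'k::field \<Rightarrow> 'v::ab_group_add \<Rightarrow> 'v" and br :: "'v \<Rightarrow> 'v \<Rightarrow> 'v"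
  assumes lie_algebra: "lie_algebra scale br"
begin

sublocale V: vector_space scale
  using lie_algebra by (simp add: lie_algebra_def)

lemma bilinear_br: "bilinear_map scale scale scale br"
  using lie_algebra by (simp add: lie_algebra_def)

lemmas br_simps [simp] = bilinear_map_simps[OF bilinear_br]

lemma br_self [simp]: "br x x = 0"
  using lie_algebra by (simp add: lie_algebra_def)

lemma br_antisym: "br x y = - br y x"
  by (rule bilinear_map_alternating_antisym[OF bilinear_br]) simp

lemma vector_space_X: "vector_space (xscale scale)"
  by (simp add: vector_space_xscale V.vector_space_axioms)

lemma linear_X_iff:
  "Vector_Spaces.linear (xscale scale) s F \<longleftrightarrow> vector_space s \<and>
     (\<forall>u w. F (u + w) = F u + F w) \<and> (\<forall>c w. F (xscale scale c w) = s c (F w))"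
  using vector_space_X by (auto simp: Vector_Spaces.linear_iff)

lemma linear_fst_X: "Vector_Spaces.linear (xscale scale) (*) fst"
  by (auto simp: linear_X_iff xscale_def vector_space_def algebra_simps)

lemma linear_snd_X: "Vector_Spaces.linear (xscale scale) scale snd"
  by (simp add: linear_X_iff xscale_def V.vector_space_axioms)

lemma linear_inr_X: "Vector_Spaces.linear scale (xscale scale) (\<lambda>x. (0, x))"
  by (simp add: Vector_Spaces.linear_iff V.vector_space_axioms vector_space_X xscale_def)

lemma linear_snd_inr_comp:
  "Vector_Spaces.linear (xscale scale) (xscale scale) F \<Longrightarrow>
    Vector_Spaces.linear scale scale (\<lambda>x. snd (F (0, x)))"
  using Vector_Spaces.linear_compose[OF Vector_Spaces.linear_compose[OF linear_inr_X] linear_snd_X]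
  by (simp add: o_def)

lemma bilinear_restrict2:
  "bilinear_map (xscale scale) (xscale scale) (xscale scale) \<psi> \<Longrightarrow>
    bilinear_map scale scale scale (restrict2 \<psi>)"
  unfolding bilinear_map_def restrict2_def by (auto intro: linear_snd_inr_comp)

lemma bilinear_Psi2:
  "bilinear_map scale scale scale \<phi> \<Longrightarrow> bilinear_map (xscale scale) (xscale scale) (xscale scale) (Psi2 \<phi>)"
  by (auto simp: bilinear_map_def linear_X_iff vector_space_X Psi2_def xscale_def bilinear_map_simps)

lemma Psi2_in_bsd_C2:
  assumes \<phi>: "bilinear_map scale scale scale \<phi>"
  shows "Psi2 \<phi> \<in> bsd_C2 scale br"
  unfolding bsd_C2_def tensor_eq_def
proof (intro CollectI conjI bilinear_Psi2[OF \<phi>] allI impI)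
  fix u v and \<beta> :: "('k, 'v) sdX \<Rightarrow> ('k, 'v) sdX \<Rightarrow> 'k"
  assume \<beta>: "bilinear_map (xscale scale) (xscale scale) (*) \<beta>"
  show "(\<Sum>(u1, u2)\<leftarrow>xDelta (Psi2 \<phi> u v). \<beta> u1 u2) =
    (\<Sum>(u1, u2)\<leftarrow>concat (map (\<lambda>(u1, u2). concat (map (\<lambda>(v1, v2).
       [(Psi2 \<phi> u1 v1, xq scale br u2 v2), (xq scale br u1 v1, Psi2 \<phi> u2 v2)]) (xDelta v))) (xDelta u)).
       \<beta> u1 u2)"
    by (simp add: xDelta_def Psi2_def xq_def xunit_def bilinear_map_simps[OF \<phi>]
        bilinear_map_simps[OF \<beta>] bilinear_map_Pair_zero[OF \<beta>])
qed

lemma bsd_delta2_Psi2: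
  assumes "\<phi> \<in> lie_C2 scale"
  shows "bsd_delta2 scale br (Psi2 \<phi>) u v w = (0, lie_delta2 br \<phi> (snd u) (snd v) (snd w))"
proof -
  have \<phi>: "bilinear_map scale scale scale \<phi>" and alt: "\<forall>x. \<phi> x x = 0"
    using assms by (auto simp: lie_C2_def)
  obtain a x b y c z where uvw: "u = (a, x)" "v = (b, y)" "w = (c, z)"
    by (cases u, cases v, cases w)
  have antisym: "\<phi> x z = - \<phi> z x" "\<phi> x (br y z) = - \<phi> (br y z) x"
    "br x z = - br z x" "br x (\<phi> y z) = - br (\<phi> y z) x"
    using bilinear_map_alternating_antisym[OF \<phi> alt] br_antisym by blast+
  show ?thesis
    unfolding uvw bsd_delta2_def Psi2_def xDelta_def xq_def xunit_def lie_delta2_def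
    by (simp add: antisym bilinear_map_simps[OF \<phi>] algebra_simps)
qed

lemma Psi2_in_bsd_Z2: "\<phi> \<in> lie_Z2 scale br \<Longrightarrow> Psi2 \<phi> \<in> bsd_Z2 scale br"
  by (auto simp: lie_Z2_def bsd_Z2_def lie_C2_def Psi2_in_bsd_C2 bsd_delta2_Psi2 zero_prod_def)

lemma Psi1_in_bsd_C1:
  assumes f: "Vector_Spaces.linear scale scale f"
  shows "Psi1 f \<in> bsd_C1 scale"
  unfolding bsd_C1_def tensor_eq_def
proof (intro CollectI conjI allI impI)
  interpret f: module_hom scale scale f
    using f by (simp add: module_hom_iff_linear)
  show "Vector_Spaces.linear (xscale scale) (xscale scale) (Psi1 f)"
    by (simp add: linear_X_iff vector_space_X Psi1_def xscale_def f.add f.scale)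
  fix w and \<beta> :: "('k, 'v) sdX \<Rightarrow> ('k, 'v) sdX \<Rightarrow> 'k"
  assume \<beta>: "bilinear_map (xscale scale) (xscale scale) (*) \<beta>"
  show "(\<Sum>(u1, u2)\<leftarrow>xDelta (Psi1 f w). \<beta> u1 u2) =
    (\<Sum>(u1, u2)\<leftarrow>map (\<lambda>(w1, w2). (Psi1 f w1, w2)) (xDelta w) @
       map (\<lambda>(w1, w2). (w1, Psi1 f w2)) (xDelta w). \<beta> u1 u2)"
    by (simp add: xDelta_def Psi1_def xunit_def bilinear_map_Pair_zero[OF \<beta>])
qed

lemma bsd_delta1_Psi1:
  assumes "Vector_Spaces.linear scale scale f"
  shows "bsd_delta1 scale br (Psi1 f) = Psi2 (lie_delta1 br f)"
proof -
  interpret f: module_hom scale scale f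
    using assms by (simp add: module_hom_iff_linear)
  show ?thesis
    by (simp add: fun_eq_iff bsd_delta1_def Psi1_def Psi2_def lie_delta1_def xq_def f.add f.scale)
qed

lemma Psi2_in_bsd_B2:
  assumes "\<phi> \<in> lie_B2 scale br"
  shows "Psi2 \<phi> \<in> bsd_B2 scale br"
proof -
  obtain f where "Vector_Spaces.linear scale scale f" and "\<phi> = lie_delta1 br f"
    using assms by (auto simp: lie_B2_def)
  then have "Psi2 \<phi> = bsd_delta1 scale br (Psi1 f)" and "Psi1 f \<in> bsd_C1 scale"
    by (simp_all add: bsd_delta1_Psi1 Psi1_in_bsd_C1)
  then show ?thesis by (simp add: bsd_B2_def)
qed

text \<open>\<open>fst\<close> is the counit \<open>\<epsilon>\<close> of \<open>X\<close>.\<close>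

lemma bilinear_fst_mult: "bilinear_map (xscale scale) (xscale scale) (*) (\<lambda>u v. fst u * fst v)"
  by (intro bilinear_map_mult_linear linear_fst_X)

lemma bsd_C1_fst_eq_zero:
  assumes "F \<in> bsd_C1 scale"
  shows "fst (F (0, y)) = 0"
proof -
  have "tensor_eq scale (xDelta (F (0, y)))
    (map (\<lambda>(w1, w2). (F w1, w2)) (xDelta (0, y)) @ map (\<lambda>(w1, w2). (w1, F w2)) (xDelta (0, y)))"
    using assms by (simp add: bsd_C1_def)
  from this[unfolded tensor_eq_def, rule_format, OF bilinear_fst_mult]
  have "fst (F (0, y)) = fst (F (0, y)) + fst (F (0, y))"
    by (simp add: xDelta_def xunit_def)
  then show ?thesis by (simp only: add_cancel_right_right)
qed

lemma lie_B2_if_Psi2_in_bsd_B2: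
  assumes "Psi2 \<phi> \<in> bsd_B2 scale br"
  shows "\<phi> \<in> lie_B2 scale br"
proof -
  obtain F where F: "F \<in> bsd_C1 scale" and \<phi>: "Psi2 \<phi> = bsd_delta1 scale br F"
    using assms by (auto simp: bsd_B2_def)
  define f where "f x = snd (F (0, x))" for x
  have "Vector_Spaces.linear scale scale f"
    unfolding f_def using F by (intro linear_snd_inr_comp) (simp add: bsd_C1_def)
  moreover have "\<phi> = lie_delta1 br f"
  proof (intro ext)
    fix x y
    have "\<phi> x y = snd (Psi2 \<phi> (0 :: 'k, x) (0, y))" by (simp add: Psi2_def)
    also have "\<dots> = snd (bsd_delta1 scale br F (0, x) (0, y))" by (simp add: \<phi>)
    finally show "\<phi> x y = lie_delta1 br f x y"
      by (simp add: bsd_delta1_def xq_def lie_delta1_def f_def bsd_C1_fst_eq_zero[OF F])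
  qed
  ultimately show ?thesis by (auto simp: lie_B2_def)
qed

lemma bilinear_X_decompose:
  assumes \<psi>: "bilinear_map (xscale scale) (xscale scale) s \<psi>" and "vector_space s"
  shows "\<psi> (a, x) (b, y) =
    s (a * b) (\<psi> (1, 0) (1, 0)) + s a (\<psi> (1, 0) (0, y)) + s b (\<psi> (0, x) (1, 0)) + \<psi> (0, x) (0, y)"
proof -
  interpret W: vector_space s by fact
  have "\<psi> (a, x) (b, y) = \<psi> (xscale scale a (1, 0) + (0, x)) (xscale scale b (1, 0) + (0, y))"
    by (simp add: xscale_def)
  also have "\<dots> = s (a * b) (\<psi> (1, 0) (1, 0)) + s a (\<psi> (1, 0) (0, y))
      + s b (\<psi> (0, x) (1, 0)) + \<psi> (0, x) (0, y)"
    by (simp add: bilinear_map_simps[OF \<psi>] W.scale_right_distrib mult.commute algebra_simps)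
  finally show ?thesis .
qed

lemma bsd_C2_fst_eq_zero:
  assumes "\<psi> \<in> bsd_C2 scale br"
  shows "fst (\<psi> u v) = 0"
proof -
  have \<psi>: "bilinear_map (xscale scale) (xscale scale) (xscale scale) \<psi>"
    and coproduct: "tensor_eq scale (xDelta (\<psi> u v))
        (concat (map (\<lambda>(u1, u2). concat (map (\<lambda>(v1, v2).
            [(\<psi> u1 v1, xq scale br u2 v2), (xq scale br u1 v1, \<psi> u2 v2)]) (xDelta v))) (xDelta u)))"
    using assms unfolding bsd_C2_def by blast+
  obtain a x b y where uv: "u = (a, x)" "v = (b, y)" by (cases u, cases v)
  let ?expansion = "a * b * fst (\<psi> (1, 0) (1, 0)) + a * fst (\<psi> (1, 0) (0, y))
    + b * fst (\<psi> (0, x) (1, 0)) + fst (\<psi> (0, x) (0, y))"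
  from coproduct[unfolded tensor_eq_def, rule_format, OF bilinear_fst_mult]
  have "fst (\<psi> u v) = fst (\<psi> u v) + ?expansion"
    unfolding uv by (simp add: xDelta_def xunit_def xq_def algebra_simps)
  moreover have "fst (\<psi> u v) = ?expansion"
    unfolding uv bilinear_X_decompose[OF \<psi> vector_space_X, of a x b y] by (simp add: xscale_def)
  ultimately have "fst (\<psi> u v) = fst (\<psi> u v) + fst (\<psi> u v)" by simp
  then show ?thesis by (simp only: add_cancel_right_right)
qed

lemma bilinear_snd_functionals:
  assumes "Vector_Spaces.linear scale (*) l1" and "Vector_Spaces.linear scale (*) l2"
  shows "bilinear_map (xscale scale) (xscale scale) (*) (\<lambda>u v. l1 (snd u) * l2 (snd v))"
  using bilinear_map_mult_linear[OF Vector_Spaces.linear_compose[OF linear_snd_X assms(1)]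
      Vector_Spaces.linear_compose[OF linear_snd_X assms(2)]]
  by (simp add: o_def)

lemma lie_Z2_if_Psi2_in_bsd_Z2:
  assumes center: "trivial_center br" and \<phi>: "bilinear_map scale scale scale \<phi>"
    and cocycle: "Psi2 \<phi> \<in> bsd_Z2 scale br"
  shows "\<phi> \<in> lie_Z2 scale br"
proof -
  have \<delta>: "bsd_delta2 scale br (Psi2 \<phi>) u v w = 0" for u v w
    using cocycle unfolding bsd_Z2_def by blast
  have "br (\<phi> y y) x = 0" for x y
    \<comment> \<open>\<open>\<delta>(\<Psi>\<^sup>2 \<phi>)((0, x), (0, y), (0, y)) = (0, -[x, \<phi>(y, y)])\<close>\<close>
    using arg_cong[OF \<delta>[of "(0, x)" "(0, y)" "(0, y)"], of snd] br_antisym[of x "\<phi> y y"]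
    by (simp add: bsd_delta2_def Psi2_def xDelta_def xunit_def xq_def bilinear_map_simps[OF \<phi>])
  then have alt: "\<phi> y y = 0" for y by (rule trivial_centerD[OF center])
  then have "\<phi> \<in> lie_C2 scale" by (simp add: lie_C2_def \<phi>)
  with \<delta> show ?thesis
    by (auto simp: lie_Z2_def bsd_delta2_Psi2 zero_prod_def)
qed

lemma zero_in_bsd_B2: "(\<lambda>_ _. 0) \<in> bsd_B2 scale br"
proof -
  have "Vector_Spaces.linear scale scale (\<lambda>_. 0)"
    by (simp add: Vector_Spaces.linear_iff V.vector_space_axioms)
  moreover have "lie_delta1 br (\<lambda>_. 0) = (\<lambda>_ _. 0)"
    by (simp add: fun_eq_iff lie_delta1_def)
  ultimately have "(\<lambda>_ _. 0) \<in> lie_B2 scale br"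
    unfolding lie_B2_def by (metis image_eqI mem_Collect_eq)
  then have "Psi2 (\<lambda>_ _. 0) \<in> bsd_B2 scale br" by (rule Psi2_in_bsd_B2)
  moreover have "Psi2 (\<lambda>_ _. 0) = (\<lambda>_ _. 0 :: ('k, 'v) sdX)"
    by (simp add: fun_eq_iff Psi2_def zero_prod_def)
  ultimately show ?thesis by simp
qed

context
  fixes \<psi>
  assumes center: "trivial_center br" and cocycle: "\<psi> \<in> bsd_Z2 scale br"
begin

lemma bsd_Z2_C2: "\<psi> \<in> bsd_C2 scale br"
  using cocycle by (simp add: bsd_Z2_def)

lemma bsd_Z2_bilinear: "bilinear_map (xscale scale) (xscale scale) (xscale scale) \<psi>"
  using bsd_Z2_C2 by (simp add: bsd_C2_def)

lemma bsd_Z2_delta2: "bsd_delta2 scale br \<psi> u v w = 0"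
  using cocycle unfolding bsd_Z2_def by blast

lemmas bsd_Z2_simps = bsd_C2_fst_eq_zero[OF bsd_Z2_C2] bilinear_map_Pair_zero[OF bsd_Z2_bilinear]

lemma bsd_Z2_unit_unit: "\<psi> (1, 0) (1, 0) = 0"
proof -
  have "br (snd (\<psi> (1, 0) (1, 0))) z = 0" for z
    using arg_cong[OF bsd_Z2_delta2[of "(1, 0)" "(1, 0)" "(0, z)"], of snd]
    by (simp add: bsd_delta2_def xDelta_def xunit_def xq_def bsd_Z2_simps)
  then have "snd (\<psi> (1, 0) (1, 0)) = 0" by (rule trivial_centerD[OF center])
  then show ?thesis by (simp add: prod_eq_iff bsd_Z2_simps)
qed

lemma bsd_Z2_unit_left: "\<psi> (1, 0) (0, y) = 0"
proof -
  define s where "s = snd (\<psi> (1, 0) (0, y))"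
  have coproduct: "tensor_eq scale (xDelta (\<psi> u v))
      (concat (map (\<lambda>(u1, u2). concat (map (\<lambda>(v1, v2).
          [(\<psi> u1 v1, xq scale br u2 v2), (xq scale br u1 v1, \<psi> u2 v2)]) (xDelta v))) (xDelta u)))"
    for u v
    using bsd_Z2_C2 unfolding bsd_C2_def by blast
  have tensor: "l1 x * l2 s + l1 s * l2 x = 0"
    if l1: "Vector_Spaces.linear scale (*) l1" and l2: "Vector_Spaces.linear scale (*) l2" for l1 l2 x
  proof -
    interpret l1: module_hom scale "(*)" l1 using l1 by (simp add: module_hom_iff_linear)
    interpret l2: module_hom scale "(*)" l2 using l2 by (simp add: module_hom_iff_linear)
    from coproduct[of "(0, x)" "(0, y)", unfolded tensor_eq_def, rule_format,
        OF bilinear_snd_functionals[OF l1 l2]]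
    show ?thesis
      by (simp add: xDelta_def xunit_def xq_def s_def bsd_Z2_simps bsd_Z2_unit_unit)
  qed
  have "br s x = 0" for x
  proof (cases "s = 0")
    case False
    then have "x \<in> V.span {s}"
      by (rule symmetric_tensor_zero_imp_in_span[OF V.vector_space_axioms]) (rule tensor)
    then show ?thesis by (auto simp: V.span_singleton)
  qed simp
  then have "s = 0" by (rule trivial_centerD[OF center])
  then show ?thesis by (simp add: prod_eq_iff bsd_Z2_simps s_def)
qed

lemma bsd_Z2_normal_form: "\<psi> (a, x) (b, y) = (0, scale b (snd (\<psi> (0, x) (1, 0))) + restrict2 \<psi> x y)"
  unfolding bilinear_X_decompose[OF bsd_Z2_bilinear vector_space_X, of a x b y]
  by (simp add: prod_eq_iff xscale_def restrict2_def bsd_Z2_unit_unit bsd_Z2_unit_left bsd_Z2_simps)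

lemma bsd_Z2_unit_right: "\<psi> (0, x) (1, 0) = 0"
proof -
  define n where "n x = snd (\<psi> (0, x) (1, 0))" for x
  have nf: "\<psi> u v = (0, scale (fst v) (n (snd u)) + restrict2 \<psi> (snd u) (snd v))" for u v
    using bsd_Z2_normal_form[of "fst u" "snd u" "fst v" "snd v"] by (simp add: n_def)
  interpret n: module_hom scale scale n
    unfolding n_def module_hom_iff_linear
    by (intro linear_snd_inr_comp bilinear_map_linear_left[OF bsd_Z2_bilinear])
  note restrict2_simps = bilinear_map_simps[OF bilinear_restrict2[OF bsd_Z2_bilinear]]
  have n_br: "br (n x) z = n (br x z)" for x z
    using arg_cong[OF bsd_Z2_delta2[of "(0, x)" "(1, 0)" "(0, z)"], of snd]
    by (simp add: bsd_delta2_def xDelta_def xunit_def xq_def nf n.add n.scale restrict2_simps)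
  have n_derivation: "n (br x y) = br (n x) y + br x (n y)" for x y
    using arg_cong[OF bsd_Z2_delta2[of "(0, x)" "(0, y)" "(1, 0)"], of snd]
    by (simp add: bsd_delta2_def xDelta_def xunit_def xq_def nf n.add n.scale restrict2_simps algebra_simps)
  have "br (n x) y = 0" for y
    using n_br[of y x] n_derivation[of y x] br_antisym[of "n x" y] by simp
  then have "n x = 0" by (rule trivial_centerD[OF center])
  then show ?thesis by (simp add: prod_eq_iff bsd_Z2_simps n_def)
qed

lemma bsd_Z2_eq_Psi2_restrict2: "\<psi> = Psi2 (restrict2 \<psi>)"
proof (intro ext)
  fix u v :: "('k, 'v) sdX"
  show "\<psi> u v = Psi2 (restrict2 \<psi>) u v"
    using bsd_Z2_normal_form[of "fst u" "snd u" "fst v" "snd v"]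
    by (simp add: bsd_Z2_unit_right Psi2_def)
qed

lemma bsd_Z2_cohomologous_Psi2: "\<exists>\<phi> \<in> lie_Z2 scale br. \<psi> - Psi2 \<phi> \<in> bsd_B2 scale br"
proof
  show "restrict2 \<psi> \<in> lie_Z2 scale br"
    using lie_Z2_if_Psi2_in_bsd_Z2[OF center bilinear_restrict2[OF bsd_Z2_bilinear]]
      cocycle bsd_Z2_eq_Psi2_restrict2 by simp
  have "\<psi> - Psi2 (restrict2 \<psi>) = (\<lambda>_ _. 0)"
    using bsd_Z2_eq_Psi2_restrict2 by (simp add: fun_eq_iff)
  then show "\<psi> - Psi2 (restrict2 \<psi>) \<in> bsd_B2 scale br"
    using zero_in_bsd_B2 by simp
qed

end

end

theorem mainTheorem6:
  fixes scale :: "'k::field \<Rightarrow> 'v::ab_group_add \<Rightarrow> 'v"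
    and br :: "'v \<Rightarrow> 'v \<Rightarrow> 'v"
  assumes "lie_algebra scale br"
  shows "(\<forall>\<phi> \<in> lie_Z2 scale br. Psi2 \<phi> \<in> bsd_Z2 scale br)
       \<and> (\<forall>\<phi> \<in> lie_B2 scale br. Psi2 \<phi> \<in> bsd_B2 scale br)
       \<and> (\<forall>\<phi> \<in> lie_Z2 scale br. \<forall>\<phi>' \<in> lie_Z2 scale br.
            Psi2 \<phi> - Psi2 \<phi>' \<in> bsd_B2 scale br \<longrightarrow> \<phi> - \<phi>' \<in> lie_B2 scale br)
       \<and> (trivial_center br \<longrightarrow>
            (\<forall>\<psi> \<in> bsd_Z2 scale br. \<exists>\<phi> \<in> lie_Z2 scale br. \<psi> - Psi2 \<phi> \<in> bsd_B2 scale br))"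
proof -
  interpret lie_alg scale br using assms by (rule lie_alg.intro)
  show ?thesis
    using Psi2_in_bsd_Z2 Psi2_in_bsd_B2 lie_B2_if_Psi2_in_bsd_B2 bsd_Z2_cohomologous_Psi2
    by (simp add: Psi2_diff)
qed

end
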